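(* Let $v$ be a vertex of a pasting scheme. There do not exist four distinct edges $e:u\to v$, $b:v\to w$, $a:q\to v$, $f:v\to p$ incident to $v$ that appear in the clockwise cyclic order of edges around $v$ in the order $e,b,a,f$ (possibly with other edges in between). Equivalently, in the cyclic order around $v$ the incoming edges form one consecutive block and the outgoing edges another.
   Context: A plane graph is a finite connected directed graph $G$ with an embedding in the plane $\mathbb C$; the edges incident to a vertex inherit a clockwise cyclic order from the orientation of the plane. Its faces are the closures of the connected components of $\mathbb C\setminus G$; the unbounded one is the exterior face, the others interior faces. Each edge has a face on its left and one on its right. The exterior face is anchorable if the set of edges having the exterior face on their left and the set having it on their right each form a nonempty directed path from a vertex $s_G$ to a vertex $t_G$. An interior face $F$ is anchorable if the set of edges having $F$ on their right and the set having $F$ on their left each form a nonempty directed path from $s_F$ to $t_F$, with no common edges and no common vertices other than $s_F,t_F$. A pasting scheme is a finite connected plane graph all of whose faces are anchorable, with $s_G$ the only vertex with no incoming edges and $t_G$ the only vertex with no outgoing edges. *)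

theory Defs
  imports Main
begin

text \<open>Plane graphs are represented combinatorially (rotation systems / combinatorial maps).
An edge e has two darts: (e, True), the half-edge at src e traversed from src e to tgt e,
and (e, False), the half-edge at tgt e traversed from tgt e to src e.
The rotation sigma maps a dart to the next dart clockwise around its vertex.\<close>

definition darts :: "'e set \<Rightarrow> ('e \<times> bool) set" where
  "darts E = E \<times> UNIV"

fun dvert :: "('e \<Rightarrow> 'v) \<Rightarrow> ('e \<Rightarrow> 'v) \<Rightarrow> 'e \<times> bool \<Rightarrow> 'v" where
  "dvert src tgt (e, b) = (if b then src e else tgt e)"

fun flip :: "'e \<times> bool \<Rightarrow> 'e \<times> bool" where
  "flip (e, b) = (e, \<not> b)"

definition verts :: "'e set \<Rightarrow> ('e \<Rightarrow> 'v) \<Rightarrow> ('e \<Rightarrow> 'v) \<Rightarrow> 'v set" where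
  "verts E src tgt = src ` E \<union> tgt ` E"

definition rotation_system ::
  "'e set \<Rightarrow> ('e \<Rightarrow> 'v) \<Rightarrow> ('e \<Rightarrow> 'v) \<Rightarrow> ('e \<times> bool \<Rightarrow> 'e \<times> bool) \<Rightarrow> bool" where
  "rotation_system E src tgt \<sigma> \<longleftrightarrow>
     bij_betw \<sigma> (darts E) (darts E) \<and>
     (\<forall>d\<in>darts E. dvert src tgt (\<sigma> d) = dvert src tgt d) \<and>
     (\<forall>d\<in>darts E. \<forall>d'\<in>darts E. dvert src tgt d = dvert src tgt d' \<longrightarrow> (\<exists>n. (\<sigma> ^^ n) d = d'))"

text \<open>Face permutation: traverse a dart, then turn to the next edge clockwise at the far end.
The face traced this way lies on the left of each traversed dart.\<close>
definition faceperm :: "('e \<times> bool \<Rightarrow> 'e \<times> bool) \<Rightarrow> 'e \<times> bool \<Rightarrow> 'e \<times> bool" where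
  "faceperm \<sigma> = \<sigma> \<circ> flip"

definition faces :: "'e set \<Rightarrow> ('e \<times> bool \<Rightarrow> 'e \<times> bool) \<Rightarrow> ('e \<times> bool) set set" where
  "faces E \<sigma> = {{(faceperm \<sigma> ^^ n) d | n. True} | d. d \<in> darts E}"

definition left_edges :: "('e \<times> bool) set \<Rightarrow> 'e set" where
  "left_edges F = {e. (e, True) \<in> F}"

definition right_edges :: "('e \<times> bool) set \<Rightarrow> 'e set" where
  "right_edges F = {e. (e, False) \<in> F}"

definition ugraph_connected :: "'e set \<Rightarrow> ('e \<Rightarrow> 'v) \<Rightarrow> ('e \<Rightarrow> 'v) \<Rightarrow> bool" where
  "ugraph_connected E src tgt \<longleftrightarrow>
     (let R = {(src e, tgt e) | e. e \<in> E} in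
      \<forall>u\<in>verts E src tgt. \<forall>w\<in>verts E src tgt. (u, w) \<in> (R \<union> R\<inverse>)\<^sup>*)"

text \<open>A finite connected plane graph: connected rotation system of genus 0 (Euler's formula).\<close>
definition plane_graph ::
  "'e set \<Rightarrow> ('e \<Rightarrow> 'v) \<Rightarrow> ('e \<Rightarrow> 'v) \<Rightarrow> ('e \<times> bool \<Rightarrow> 'e \<times> bool) \<Rightarrow> bool" where
  "plane_graph E src tgt \<sigma> \<longleftrightarrow>
     finite E \<and> E \<noteq> {} \<and> rotation_system E src tgt \<sigma> \<and> ugraph_connected E src tgt \<and>
     int (card (verts E src tgt)) - int (card E) + int (card (faces E \<sigma>)) = 2"

definition is_dpath :: "('e \<Rightarrow> 'v) \<Rightarrow> ('e \<Rightarrow> 'v) \<Rightarrow> 'e set \<Rightarrow> 'v \<Rightarrow> 'v \<Rightarrow> bool" where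
  "is_dpath src tgt S s t \<longleftrightarrow>
     (\<exists>es. es \<noteq> [] \<and> distinct es \<and> set es = S \<and> src (hd es) = s \<and> tgt (last es) = t \<and>
        (\<forall>i. i + 1 < length es \<longrightarrow> tgt (es ! i) = src (es ! (i + 1))) \<and>
        distinct (src (hd es) # map tgt es))"

definition edge_verts :: "('e \<Rightarrow> 'v) \<Rightarrow> ('e \<Rightarrow> 'v) \<Rightarrow> 'e set \<Rightarrow> 'v set" where
  "edge_verts src tgt S = src ` S \<union> tgt ` S"

definition interior_anchorable :: "('e \<Rightarrow> 'v) \<Rightarrow> ('e \<Rightarrow> 'v) \<Rightarrow> ('e \<times> bool) set \<Rightarrow> bool" where
  "interior_anchorable src tgt F \<longleftrightarrow>
     (\<exists>s t. is_dpath src tgt (right_edges F) s t \<and> is_dpath src tgt (left_edges F) s t \<and>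
        right_edges F \<inter> left_edges F = {} \<and>
        edge_verts src tgt (right_edges F) \<inter> edge_verts src tgt (left_edges F) \<subseteq> {s, t})"

definition pasting_scheme ::
  "'e set \<Rightarrow> ('e \<Rightarrow> 'v) \<Rightarrow> ('e \<Rightarrow> 'v) \<Rightarrow> ('e \<times> bool \<Rightarrow> 'e \<times> bool) \<Rightarrow> ('e \<times> bool) set \<Rightarrow> bool" where
  "pasting_scheme E src tgt \<sigma> ext \<longleftrightarrow>
     plane_graph E src tgt \<sigma> \<and> ext \<in> faces E \<sigma> \<and>
     (\<forall>F\<in>faces E \<sigma>. F \<noteq> ext \<longrightarrow> interior_anchorable src tgt F) \<and>
     (\<exists>s t. is_dpath src tgt (left_edges ext) s t \<and> is_dpath src tgt (right_edges ext) s t \<and>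
        (\<forall>v\<in>verts E src tgt. (\<not> (\<exists>e\<in>E. tgt e = v)) \<longleftrightarrow> v = s) \<and>
        (\<forall>v\<in>verts E src tgt. (\<not> (\<exists>e\<in>E. src e = v)) \<longleftrightarrow> v = t))"

definition cyclic_order4 ::
  "('e \<times> bool \<Rightarrow> 'e \<times> bool) \<Rightarrow> 'e \<times> bool \<Rightarrow> 'e \<times> bool \<Rightarrow> 'e \<times> bool \<Rightarrow> 'e \<times> bool \<Rightarrow> bool" where
  "cyclic_order4 \<sigma> d1 d2 d3 d4 \<longleftrightarrow>
     (\<exists>i j k. 0 < i \<and> i < j \<and> j < k \<and>
        (\<sigma> ^^ i) d1 = d2 \<and> (\<sigma> ^^ j) d1 = d3 \<and> (\<sigma> ^^ k) d1 = d4 \<and>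
        (\<forall>m. 0 < m \<and> m \<le> k \<longrightarrow> (\<sigma> ^^ m) d1 \<noteq> d1))"

end

theory Submission
  imports Defs "HOL-Combinatorics.Orbits"
begin

(* Count switches. A dart d leaves its vertex iff snd d. Going around a vertex, the
   corner between consecutive darts d and sigma d is a vertex switch if one of the two
   edges enters the vertex and the other leaves it; going around a face, a corner is a
   face switch if the boundary passes there between the left and the right path of the
   face. Since faceperm sigma = sigma o flip, d starts a face switch iff flip d starts no
   vertex switch, so the two numbers of switches add up to the number 2|E| of darts.
   Every face has at least 2 switches, every vertex other than the source and the sink
   has at least 2, and a vertex with the pattern e, b, a, f has at least 4. Hence
   2|E| >= 2|F| + 2|V| - 2, contradicting Euler's formula |V| - |E| + |F| = 2. *)

definition switches :: "('a \<Rightarrow> 'a) \<Rightarrow> ('a \<Rightarrow> bool) \<Rightarrow> 'a set \<Rightarrow> 'a set" where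
  "switches g P A = {y \<in> A. P y \<noteq> P (g y)}"

lemma finite_switches [simp]: "finite A \<Longrightarrow> finite (switches g P A)"
  by (simp add: switches_def)

lemma self_in_orbit_bij_betw:
  assumes "bij_betw g D D" "finite D" "x \<in> D"
  shows "x \<in> orbit g x"
proof -
  have "restrict_id g D permutes D"
    using assms(1) by (rule permutes_restrict_id)
  then have "x \<in> orbit (restrict_id g D) x"
    using assms(2) by (meson permutation_permutes permutation_self_in_orbit)
  moreover have "orbit (restrict_id g D) x = orbit g x"
    using assms(1,3) by (intro orbit_cong0) (auto dest: bij_betwE)
  ultimately show ?thesis by simp
qed

lemma orbit_eq_if_in_orbit:
  assumes "x \<in> orbit f x" "y \<in> orbit f x"
  shows "orbit f y = orbit f x"
  using assms by (meson orbit_swap orbit_trans self_in_orbit_trans subsetI subset_antisym)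

lemma funpow_switch_between:
  assumes "a < b" "P ((g ^^ a) x) \<noteq> P ((g ^^ b) x)"
  shows "\<exists>c. a \<le> c \<and> c < b \<and> P ((g ^^ c) x) \<noteq> P ((g ^^ Suc c) x)"
  using assms
proof (induction b)
  case (Suc b)
  show ?case
  proof (cases "P ((g ^^ b) x) = P ((g ^^ Suc b) x)")
    case True
    with Suc.prems have "a < b"
      by (auto simp: less_Suc_eq)
    with Suc.IH Suc.prems(2) True show ?thesis
      by (auto intro: less_SucI)
  next
    case False
    with Suc.prems(1) show ?thesis
      by (auto simp: less_Suc_eq_le)
  qed
qed simp

lemma card_le_card_switches_orbit:
  assumes "x \<in> orbit g x" "orbit g x \<subseteq> A" "finite A"
    and "C \<subseteq> {..<funpow_dist1 g x x}"
    and "\<And>c. c \<in> C \<Longrightarrow> P ((g ^^ c) x) \<noteq> P ((g ^^ Suc c) x)"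
  shows "card C \<le> card (switches g P A)"
proof (rule card_inj_on_le)
  show "inj_on (\<lambda>c. (g ^^ c) x) C"
    by (rule inj_on_subset[OF inj_on_funpow_dist1[OF assms(1)]]) (use assms(4) in auto)
  show "(\<lambda>c. (g ^^ c) x) ` C \<subseteq> switches g P A"
    using assms(1,2,5) funpow_in_orbit by (fastforce simp: switches_def)
qed (simp add: assms(3))

lemma two_le_card_switches_orbit:
  assumes "x \<in> orbit g x" "orbit g x \<subseteq> A" "finite A"
    and "y \<in> orbit g x" "P y \<noteq> P x"
  shows "2 \<le> card (switches g P A)"
proof -
  define p where "p = funpow_dist1 g x x"
  have p: "0 < p" "(g ^^ p) x = x"
    using funpow_dist1_prop[OF assms(1)] by (simp_all add: p_def)
  then obtain m where m: "m < p" "y = (g ^^ m) x"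
    using assms(4) orbit_altdef_bounded[OF p(2,1)] by auto
  with assms(5) have "0 < m" by (cases m) auto
  then obtain c1 where "c1 < m" "P ((g ^^ c1) x) \<noteq> P ((g ^^ Suc c1) x)"
    using funpow_switch_between[of 0 m P g x] m assms(5) by auto
  moreover obtain c2 where "m \<le> c2" "c2 < p" "P ((g ^^ c2) x) \<noteq> P ((g ^^ Suc c2) x)"
    using funpow_switch_between[of m p P g x] m p assms(5) by auto
  ultimately have "card {c1, c2} \<le> card (switches g P A)"
    by (intro card_le_card_switches_orbit[OF assms(1-3)]) (auto simp: p_def)
  with \<open>c1 < m\<close> \<open>m \<le> c2\<close> show ?thesis by simp
qed

lemma four_le_card_switches_orbit:
  assumes "x \<in> orbit g x" "orbit g x \<subseteq> A" "finite A"
    and "0 < i" "i < j" "j < k" "\<And>m. 0 < m \<Longrightarrow> m \<le> k \<Longrightarrow> (g ^^ m) x \<noteq> x"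
    and "P x \<noteq> P ((g ^^ i) x)" "P ((g ^^ i) x) \<noteq> P ((g ^^ j) x)"
    and "P ((g ^^ j) x) \<noteq> P ((g ^^ k) x)" "P ((g ^^ k) x) \<noteq> P x"
  shows "4 \<le> card (switches g P A)"
proof -
  define p where "p = funpow_dist1 g x x"
  have p: "0 < p" "(g ^^ p) x = x"
    using funpow_dist1_prop[OF assms(1)] by (simp_all add: p_def)
  have "k < p"
    using assms(7)[of p] p by (cases "k < p") auto
  obtain c1 where "c1 < i" "P ((g ^^ c1) x) \<noteq> P ((g ^^ Suc c1) x)"
    using funpow_switch_between[of 0 i P g x] assms(4,8) by auto
  moreover obtain c2 where "i \<le> c2" "c2 < j" "P ((g ^^ c2) x) \<noteq> P ((g ^^ Suc c2) x)"
    using funpow_switch_between[of i j P g x] assms(5,9) by auto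
  moreover obtain c3 where "j \<le> c3" "c3 < k" "P ((g ^^ c3) x) \<noteq> P ((g ^^ Suc c3) x)"
    using funpow_switch_between[of j k P g x] assms(6,10) by auto
  moreover obtain c4 where "k \<le> c4" "c4 < p" "P ((g ^^ c4) x) \<noteq> P ((g ^^ Suc c4) x)"
    using funpow_switch_between[of k p P g x] \<open>k < p\<close> p assms(11) by auto
  ultimately have "card {c1, c2, c3, c4} \<le> card (switches g P A)"
    by (intro card_le_card_switches_orbit[OF assms(1-3)]) (auto simp: p_def)
  moreover have "card {c1, c2, c3, c4} = 4"
    using \<open>c1 < i\<close> \<open>i \<le> c2\<close> \<open>c2 < j\<close> \<open>j \<le> c3\<close> \<open>c3 < k\<close> \<open>k \<le> c4\<close> by auto
  ultimately show ?thesis by simp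
qed

definition darts_at :: "'e set \<Rightarrow> ('e \<Rightarrow> 'v) \<Rightarrow> ('e \<Rightarrow> 'v) \<Rightarrow> 'v \<Rightarrow> ('e \<times> bool) set" where
  "darts_at E src tgt w = {d \<in> darts E. dvert src tgt d = w}"

lemma finite_darts: "finite E \<Longrightarrow> finite (darts E)"
  by (simp add: darts_def)

lemma card_darts: "finite E \<Longrightarrow> card (darts E) = 2 * card E"
  by (simp add: darts_def card_cartesian_product)

lemma flip_flip [simp]: "flip (flip d) = d"
  by (cases d) simp

lemma inj_flip: "inj flip"
  by (rule injI) (metis flip_flip)

lemma bij_betw_flip_darts: "bij_betw flip (darts E) (darts E)"
  by (rule bij_betwI[of _ _ _ flip]) (auto simp: darts_def)

lemma bij_betw_faceperm:
  "bij_betw \<sigma> (darts E) (darts E) \<Longrightarrow> bij_betw (faceperm \<sigma>) (darts E) (darts E)"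
  unfolding faceperm_def by (rule bij_betw_trans[OF bij_betw_flip_darts])

lemma card_switches_add_card_face_switches:
  assumes "finite E"
  shows "card (switches \<sigma> snd (darts E)) + card (switches (faceperm \<sigma>) snd (darts E)) = 2 * card E"
proof -
  let ?S = "{d \<in> darts E. snd d = snd (\<sigma> d)}"
  have "card (darts E) = card (switches \<sigma> snd (darts E) \<union> ?S)"
    by (rule arg_cong[of _ _ card]) (auto simp: switches_def)
  also have "\<dots> = card (switches \<sigma> snd (darts E)) + card ?S"
    using finite_darts[OF assms] by (intro card_Un_disjoint) (auto simp: switches_def)
  finally have darts_split: "card (darts E) = card (switches \<sigma> snd (darts E)) + card ?S" .
  have mem: "d \<in> switches (faceperm \<sigma>) snd (darts E) \<longleftrightarrow> flip d \<in> ?S" for d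
    by (cases d) (auto simp: switches_def faceperm_def darts_def)
  have "switches (faceperm \<sigma>) snd (darts E) = flip ` ?S"
  proof (intro set_eqI iffI)
    fix d assume "d \<in> switches (faceperm \<sigma>) snd (darts E)"
    then show "d \<in> flip ` ?S"
      using mem[of d] by (intro image_eqI[of d flip "flip d"]) simp_all
  next
    fix d assume "d \<in> flip ` ?S"
    then have "flip d \<in> ?S"
      by (auto simp del: flip.simps)
    then show "d \<in> switches (faceperm \<sigma>) snd (darts E)"
      using mem by blast
  qed
  moreover have "card (flip ` ?S) = card ?S"
    by (rule card_image) (rule inj_on_subset[OF inj_flip subset_UNIV])
  ultimately show ?thesis
    using darts_split card_darts[OF assms] by simp
qed

lemma rotation_system_orbit:
  assumes "rotation_system E src tgt \<sigma>" "finite E" "d \<in> darts E"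
  shows "d \<in> orbit \<sigma> d" and "orbit \<sigma> d = darts_at E src tgt (dvert src tgt d)"
proof -
  have bij: "bij_betw \<sigma> (darts E) (darts E)"
    and stays: "\<And>d. d \<in> darts E \<Longrightarrow> dvert src tgt (\<sigma> d) = dvert src tgt d"
    and reach: "\<And>d d'. d \<in> darts E \<Longrightarrow> d' \<in> darts E \<Longrightarrow>
      dvert src tgt d = dvert src tgt d' \<Longrightarrow> \<exists>n. (\<sigma> ^^ n) d = d'"
    using assms(1) unfolding rotation_system_def by blast+
  show self: "d \<in> orbit \<sigma> d"
    using bij finite_darts[OF assms(2)] assms(3) by (rule self_in_orbit_bij_betw)
  show "orbit \<sigma> d = darts_at E src tgt (dvert src tgt d)"
  proof
    show "orbit \<sigma> d \<subseteq> darts_at E src tgt (dvert src tgt d)"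
    proof
      fix d' assume "d' \<in> orbit \<sigma> d"
      then show "d' \<in> darts_at E src tgt (dvert src tgt d)"
        by induction (use assms(3) bij stays in \<open>auto simp: darts_at_def dest: bij_betwE\<close>)
    qed
    show "darts_at E src tgt (dvert src tgt d) \<subseteq> orbit \<sigma> d"
    proof
      fix d' assume "d' \<in> darts_at E src tgt (dvert src tgt d)"
      then have "d' \<in> darts E" "dvert src tgt d = dvert src tgt d'"
        by (simp_all add: darts_at_def)
      then obtain n where "(\<sigma> ^^ n) d = d'"
        using reach[OF assms(3)] by blast
      then show "d' \<in> orbit \<sigma> d"
        using orbit_altdef_self_in[OF self] by auto
    qed
  qed
qed

lemma two_le_card_vertex_switches:
  assumes "rotation_system E src tgt \<sigma>" "finite E"
    and "e \<in> E" "tgt e = w" "f \<in> E" "src f = w"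
  shows "2 \<le> card (switches \<sigma> snd (darts_at E src tgt w))"
proof (rule two_le_card_switches_orbit)
  have "(e, False) \<in> darts E" "(f, True) \<in> darts E"
    using assms(3,5) by (simp_all add: darts_def)
  with assms show "(e, False) \<in> orbit \<sigma> (e, False)" "(f, True) \<in> orbit \<sigma> (e, False)"
    and "orbit \<sigma> (e, False) \<subseteq> darts_at E src tgt w"
    by (simp_all add: rotation_system_orbit darts_at_def)
  show "finite (darts_at E src tgt w)"
    using assms(2) by (simp add: darts_at_def darts_def)
qed simp

lemma four_le_card_vertex_switches:
  assumes "rotation_system E src tgt \<sigma>" "finite E" "e \<in> E" "tgt e = w"
    and "cyclic_order4 \<sigma> (e, False) (b, True) (a, False) (f, True)"
  shows "4 \<le> card (switches \<sigma> snd (darts_at E src tgt w))"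
proof -
  have e: "(e, False) \<in> darts E"
    using assms(3) by (simp add: darts_def)
  obtain i j k where "0 < i" "i < j" "j < k"
    and "(\<sigma> ^^ i) (e, False) = (b, True)" "(\<sigma> ^^ j) (e, False) = (a, False)"
    "(\<sigma> ^^ k) (e, False) = (f, True)"
    and "\<And>m. 0 < m \<Longrightarrow> m \<le> k \<Longrightarrow> (\<sigma> ^^ m) (e, False) \<noteq> (e, False)"
    using assms(5) unfolding cyclic_order4_def by blast
  then show ?thesis
    using rotation_system_orbit[OF assms(1,2) e] assms(2,4)
    by (intro four_le_card_switches_orbit[where x = "(e, False)" and i = i and j = j and k = k])
      (simp_all add: darts_at_def darts_def)
qed

lemma dvert_in_verts: "d \<in> darts E \<Longrightarrow> dvert src tgt d \<in> verts E src tgt"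
  by (cases d) (auto simp: darts_def verts_def)

lemma sum_card_vertex_switches:
  assumes "finite E"
  shows "(\<Sum>w\<in>verts E src tgt. card (switches \<sigma> P (darts_at E src tgt w)))
    = card (switches \<sigma> P (darts E))"
proof -
  have "switches \<sigma> P (darts E) = (\<Union>w\<in>verts E src tgt. switches \<sigma> P (darts_at E src tgt w))"
    using dvert_in_verts by (fastforce simp: switches_def darts_at_def)
  also have "card \<dots> = (\<Sum>w\<in>verts E src tgt. card (switches \<sigma> P (darts_at E src tgt w)))"
    using assms by (intro card_UN_disjoint) (auto simp: switches_def darts_at_def darts_def verts_def)
  finally show ?thesis by simp
qed

lemma two_mul_card_verts_le_vertex_switches:
  assumes "rotation_system E src tgt \<sigma>" "finite E"
    and "\<And>w. w \<in> verts E src tgt - {s, t} \<Longrightarrow> (\<exists>e\<in>E. tgt e = w) \<and> (\<exists>e\<in>E. src e = w)"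
    and "v \<in> verts E src tgt - {s, t}" "4 \<le> card (switches \<sigma> snd (darts_at E src tgt v))"
  shows "2 * card (verts E src tgt) \<le> card (switches \<sigma> snd (darts E)) + 2"
proof -
  let ?V = "verts E src tgt" and ?I = "verts E src tgt - {s, t}"
  let ?n = "\<lambda>w. card (switches \<sigma> snd (darts_at E src tgt w))"
  have fin: "finite ?V"
    using assms(2) by (simp add: verts_def)
  then have I: "finite ?I" "v \<in> ?I"
    using assms(4) by simp_all
  have "2 * card ?I + 2 \<le> sum ?n ?I"
  proof -
    have "2 \<le> ?n w" if "w \<in> ?I - {v}" for w
      using assms(3)[of w] that two_le_card_vertex_switches[OF assms(1,2)] by blast
    then have "2 * card (?I - {v}) \<le> sum ?n (?I - {v})"
      using sum_mono[of "?I - {v}" "\<lambda>_. 2" ?n] by simp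
    moreover have "sum ?n ?I = ?n v + sum ?n (?I - {v})"
      using I by (rule sum.remove)
    ultimately show ?thesis
      using card_Suc_Diff1[OF I] assms(5) by linarith
  qed
  also have "sum ?n ?I \<le> sum ?n ?V"
    using fin by (intro sum_mono2) auto
  also have "\<dots> = card (switches \<sigma> snd (darts E))"
    by (rule sum_card_vertex_switches[OF assms(2)])
  finally show ?thesis
    using diff_card_le_card_Diff[of "{s, t}" ?V] by (cases "s = t") simp_all
qed

lemma faces_eq_orbits:
  assumes "bij_betw \<sigma> (darts E) (darts E)" "finite E"
  shows "faces E \<sigma> = orbit (faceperm \<sigma>) ` darts E"
proof -
  have self: "d \<in> orbit (faceperm \<sigma>) d" if "d \<in> darts E" for d
    using bij_betw_faceperm[OF assms(1)] finite_darts[OF assms(2)] that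
    by (rule self_in_orbit_bij_betw)
  have "faces E \<sigma> = (\<lambda>d. {(faceperm \<sigma> ^^ n) d | n. True}) ` darts E"
    unfolding faces_def by (rule Setcompr_eq_image)
  also have "\<dots> = orbit (faceperm \<sigma>) ` darts E"
    by (rule image_cong[OF refl]) (simp add: orbit_altdef_self_in self)
  finally show ?thesis .
qed

lemma orbit_faceperm_subset_darts:
  assumes "bij_betw \<sigma> (darts E) (darts E)" "d \<in> darts E"
  shows "orbit (faceperm \<sigma>) d \<subseteq> darts E"
  using bij_betw_funpow[OF bij_betw_faceperm[OF assms(1)]] assms(2)
  by (fastforce simp: orbit_altdef bij_betw_def)

lemma face_orbitE:
  assumes "bij_betw \<sigma> (darts E) (darts E)" "finite E" "F \<in> faces E \<sigma>"
  obtains d where "d \<in> darts E" "F = orbit (faceperm \<sigma>) d" "d \<in> orbit (faceperm \<sigma>) d"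
proof -
  from assms(3) have "F \<in> orbit (faceperm \<sigma>) ` darts E"
    by (simp only: faces_eq_orbits[OF assms(1,2)])
  then obtain d where d: "d \<in> darts E" "F = orbit (faceperm \<sigma>) d"
    by (rule imageE) simp
  moreover have "d \<in> orbit (faceperm \<sigma>) d"
    using bij_betw_faceperm[OF assms(1)] finite_darts[OF assms(2)] d(1)
    by (rule self_in_orbit_bij_betw)
  ultimately show ?thesis
    by (rule that)
qed

lemma faces_disjoint:
  assumes "bij_betw \<sigma> (darts E) (darts E)" "finite E"
    and "F1 \<in> faces E \<sigma>" "F2 \<in> faces E \<sigma>" "F1 \<noteq> F2"
  shows "F1 \<inter> F2 = {}"
proof -
  have face_is_orbit: "F = orbit (faceperm \<sigma>) y" if F: "F \<in> faces E \<sigma>" and y: "y \<in> F" for F y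
  proof -
    obtain d where "d \<in> darts E" "F = orbit (faceperm \<sigma>) d" "d \<in> orbit (faceperm \<sigma>) d"
      by (rule face_orbitE[OF assms(1,2) F])
    then show ?thesis
      using orbit_eq_if_in_orbit[of d "faceperm \<sigma>" y] y by simp
  qed
  show ?thesis
  proof (rule ccontr)
    assume "F1 \<inter> F2 \<noteq> {}"
    then obtain y where "y \<in> F1" "y \<in> F2"
      by blast
    from face_is_orbit[OF assms(3) this(1)] face_is_orbit[OF assms(4) this(2)]
    have "F1 = F2"
      by simp
    with assms(5) show False ..
  qed
qed

lemma two_mul_card_faces_le_face_switches:
  assumes "bij_betw \<sigma> (darts E) (darts E)" "finite E"
    and "\<And>F. F \<in> faces E \<sigma> \<Longrightarrow> left_edges F \<noteq> {} \<and> right_edges F \<noteq> {}"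
  shows "2 * card (faces E \<sigma>) \<le> card (switches (faceperm \<sigma>) snd (darts E))"
proof -
  let ?\<phi> = "faceperm \<sigma>"
  have fin: "finite (darts E)"
    using assms(2) by (rule finite_darts)
  have finite_faces: "finite (faces E \<sigma>)"
    using fin faces_eq_orbits[OF assms(1,2)] by simp
  have sub: "F \<subseteq> darts E" if F: "F \<in> faces E \<sigma>" for F
  proof -
    obtain d where "d \<in> darts E" "F = orbit ?\<phi> d" "d \<in> orbit ?\<phi> d"
      by (rule face_orbitE[OF assms(1,2) F])
    then show ?thesis
      using orbit_faceperm_subset_darts[OF assms(1)] by simp
  qed
  have two: "2 \<le> card (switches ?\<phi> snd F)" if F: "F \<in> faces E \<sigma>" for F
  proof -
    obtain d where d: "d \<in> darts E" "F = orbit ?\<phi> d" "d \<in> orbit ?\<phi> d"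
      by (rule face_orbitE[OF assms(1,2) F])
    have "\<exists>y\<in>F. snd y \<noteq> snd d"
      using assms(3)[OF F] by (cases "snd d") (fastforce simp: left_edges_def right_edges_def)+
    then obtain y where "y \<in> F" "snd y \<noteq> snd d" ..
    then show ?thesis
      using d sub[OF F] fin
      by (intro two_le_card_switches_orbit[of d]) (auto intro: finite_subset)
  qed
  have "2 * card (faces E \<sigma>) \<le> (\<Sum>F\<in>faces E \<sigma>. card (switches ?\<phi> snd F))"
    using sum_mono[of "faces E \<sigma>" "\<lambda>_. 2" "\<lambda>F. card (switches ?\<phi> snd F)"] two
    by (simp add: mult.commute)
  also have "\<dots> = card (\<Union>F\<in>faces E \<sigma>. switches ?\<phi> snd F)"
  proof (rule card_UN_disjoint[symmetric])
    show "\<forall>F\<in>faces E \<sigma>. finite (switches ?\<phi> snd F)"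
      using fin sub by (meson finite_subset finite_switches)
    show "\<forall>F1\<in>faces E \<sigma>. \<forall>F2\<in>faces E \<sigma>. F1 \<noteq> F2 \<longrightarrow>
        switches ?\<phi> snd F1 \<inter> switches ?\<phi> snd F2 = {}"
      using faces_disjoint[OF assms(1,2)] by (auto simp: switches_def)
  qed (rule finite_faces)
  also have "\<dots> \<le> card (switches ?\<phi> snd (darts E))"
    using fin sub by (intro card_mono) (auto simp: switches_def)
  finally show ?thesis .
qed

lemma is_dpath_nonempty: "is_dpath src tgt S s t \<Longrightarrow> S \<noteq> {}"
  unfolding is_dpath_def by auto

lemma pasting_scheme_faces_two_sided:
  assumes "pasting_scheme E src tgt \<sigma> ext" "F \<in> faces E \<sigma>"
  shows "left_edges F \<noteq> {} \<and> right_edges F \<noteq> {}"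
proof (cases "F = ext")
  case True
  with assms(1) show ?thesis
    unfolding pasting_scheme_def by (auto dest: is_dpath_nonempty)
next
  case False
  with assms have "interior_anchorable src tgt F"
    unfolding pasting_scheme_def by blast
  then show ?thesis
    unfolding interior_anchorable_def by (auto dest: is_dpath_nonempty)
qed

lemma pasting_scheme_poles:
  assumes "pasting_scheme E src tgt \<sigma> ext"
  obtains s t where "\<And>w. w \<in> verts E src tgt \<Longrightarrow>
    w \<notin> {s, t} \<longleftrightarrow> (\<exists>e\<in>E. tgt e = w) \<and> (\<exists>e\<in>E. src e = w)"
proof -
  obtain s t where "\<forall>w\<in>verts E src tgt. (\<not> (\<exists>e\<in>E. tgt e = w)) \<longleftrightarrow> w = s"
    and "\<forall>w\<in>verts E src tgt. (\<not> (\<exists>e\<in>E. src e = w)) \<longleftrightarrow> w = t"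
    using assms unfolding pasting_scheme_def by blast
  then show ?thesis
    by (intro that[of s t]) auto
qed

theorem mainTheorem11:
  fixes E :: "'e set" and src tgt :: "'e \<Rightarrow> 'v"
    and \<sigma> :: "'e \<times> bool \<Rightarrow> 'e \<times> bool" and ext :: "('e \<times> bool) set" and v :: 'v
  assumes "pasting_scheme E src tgt \<sigma> ext"
    and "v \<in> verts E src tgt"
  shows "\<not> (\<exists>e b a f. e \<in> E \<and> b \<in> E \<and> a \<in> E \<and> f \<in> E \<and>
            distinct [e, b, a, f] \<and>
            tgt e = v \<and> src b = v \<and> tgt a = v \<and> src f = v \<and>
            cyclic_order4 \<sigma> (e, False) (b, True) (a, False) (f, True))"
proof
  assume "\<exists>e b a f. e \<in> E \<and> b \<in> E \<and> a \<in> E \<and> f \<in> E \<and>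
            distinct [e, b, a, f] \<and>
            tgt e = v \<and> src b = v \<and> tgt a = v \<and> src f = v \<and>
            cyclic_order4 \<sigma> (e, False) (b, True) (a, False) (f, True)"
  then obtain e b a f where e: "e \<in> E" "tgt e = v" and b: "b \<in> E" "src b = v"
    and order: "cyclic_order4 \<sigma> (e, False) (b, True) (a, False) (f, True)"
    by blast
  have rot: "rotation_system E src tgt \<sigma>" and fin: "finite E"
    and euler: "int (card (verts E src tgt)) - int (card E) + int (card (faces E \<sigma>)) = 2"
    using assms(1) unfolding pasting_scheme_def plane_graph_def by auto
  obtain s t where poles: "\<And>w. w \<in> verts E src tgt \<Longrightarrow>
      w \<notin> {s, t} \<longleftrightarrow> (\<exists>e\<in>E. tgt e = w) \<and> (\<exists>e\<in>E. src e = w)"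
    using pasting_scheme_poles[OF assms(1)] by blast
  have "v \<in> verts E src tgt - {s, t}"
    using poles[OF assms(2)] assms(2) e b by blast
  moreover have "4 \<le> card (switches \<sigma> snd (darts_at E src tgt v))"
    using four_le_card_vertex_switches[OF rot fin e order] .
  ultimately have "2 * card (verts E src tgt) \<le> card (switches \<sigma> snd (darts E)) + 2"
    using poles by (intro two_mul_card_verts_le_vertex_switches[OF rot fin]) auto
  moreover have "2 * card (faces E \<sigma>) \<le> card (switches (faceperm \<sigma>) snd (darts E))"
    using rot fin pasting_scheme_faces_two_sided[OF assms(1)]
    by (intro two_mul_card_faces_le_face_switches) (auto simp: rotation_system_def)
  ultimately show False
    using card_switches_add_card_face_switches[OF fin, of \<sigma>] euler by linarith
qed

end
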